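(* Let $(A,*,\{\cdot,\cdot,\cdot\})$ be a pre-Lie-Yamaguti algebra. Then for all $x,y,z,w,t\in A$: $$\{[x,y]_C,z,w\}_D+\{[y,z]_C,x,w\}_D+\{[z,x]_C,y,w\}_D=0,$$ and $$\{x,y,\{z,w,t\}_D\}_D-\{\{x,y,z\}_D,w,t\}_D-\{\{x,y,z\},w,t\}_D+\{\{y,x,z\},w,t\}_D-\{z,\{x,y,w\}_D,t\}_D-\{z,\{x,y,w\},t\}_D+\{z,\{y,x,w\},t\}_D-\{z,w,\{x,y,t\}_D\}_D=0.$$
   Context: All vector spaces are over a field of characteristic $0$. A pre-Lie-Yamaguti algebra is a vector space $A$ with a bilinear operation $*$ and a trilinear operation $\{\cdot,\cdot,\cdot\}$ such that, writing $[x,y]_C=x*y-y*x$, $(x,y,z)=(x*y)*z-x*(y*z)$ and $\{x,y,z\}_D=\{z,y,x\}-\{z,x,y\}+(y,x,z)-(x,y,z)$, for all $x,y,z,w,t\in A$: (P1) $\{z,[x,y]_C,w\}-\{y*z,x,w\}+\{x*z,y,w\}=0$; (P2) $\{x,y,[z,w]_C\}=z*\{x,y,w\}-w*\{x,y,z\}$; (P3) $\{\{x,y,z\},w,t\}-\{\{x,y,w\},z,t\}-\{x,y,\{z,w,t\}_D\}-\{x,y,\{z,w,t\}\}+\{x,y,\{w,z,t\}\}+\{z,w,\{x,y,t\}\}_D=0$; (P4) $\{z,\{x,y,w\}_D,t\}+\{z,\{x,y,w\},t\}-\{z,\{y,x,w\},t\}+\{z,w,\{x,y,t\}_D\}+\{z,w,\{x,y,t\}\}-\{z,w,\{y,x,t\}\}=\{x,y,\{z,w,t\}\}_D-\{\{x,y,z\}_D,w,t\}$;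 (P5) $\{x,y,z\}_D*w+\{x,y,z\}*w-\{y,x,z\}*w=\{x,y,z*w\}_D-z*\{x,y,w\}_D$. *)

theory Defs
  imports Complex_Main
begin

definition lin_in :: "('k::field \<Rightarrow> 'a::ab_group_add \<Rightarrow> 'a) \<Rightarrow> ('a \<Rightarrow> 'a) \<Rightarrow> bool" where
  "lin_in scale f \<longleftrightarrow> (\<forall>u v. f (u + v) = f u + f v) \<and> (\<forall>c u. f (scale c u) = scale c (f u))"

definition bilinear_op :: "('k::field \<Rightarrow> 'a::ab_group_add \<Rightarrow> 'a) \<Rightarrow> ('a \<Rightarrow> 'a \<Rightarrow> 'a) \<Rightarrow> bool" where
  "bilinear_op scale m \<longleftrightarrow> (\<forall>y. lin_in scale (\<lambda>x. m x y)) \<and> (\<forall>x. lin_in scale (\<lambda>y. m x y))"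

definition trilinear_op :: "('k::field \<Rightarrow> 'a::ab_group_add \<Rightarrow> 'a) \<Rightarrow> ('a \<Rightarrow> 'a \<Rightarrow> 'a \<Rightarrow> 'a) \<Rightarrow> bool" where
  "trilinear_op scale T \<longleftrightarrow> (\<forall>y z. lin_in scale (\<lambda>x. T x y z)) \<and> (\<forall>x z. lin_in scale (\<lambda>y. T x y z))
     \<and> (\<forall>x y. lin_in scale (\<lambda>z. T x y z))"

definition commC :: "('a \<Rightarrow> 'a \<Rightarrow> 'a) \<Rightarrow> 'a \<Rightarrow> 'a \<Rightarrow> 'a::ab_group_add" where
  "commC m x y = m x y - m y x"

definition assoc3 :: "('a \<Rightarrow> 'a \<Rightarrow> 'a) \<Rightarrow> 'a \<Rightarrow> 'a \<Rightarrow> 'a \<Rightarrow> 'a::ab_group_add" where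
  "assoc3 m x y z = m (m x y) z - m x (m y z)"

definition braceD :: "('a \<Rightarrow> 'a \<Rightarrow> 'a) \<Rightarrow> ('a \<Rightarrow> 'a \<Rightarrow> 'a \<Rightarrow> 'a) \<Rightarrow> 'a \<Rightarrow> 'a \<Rightarrow> 'a \<Rightarrow> 'a::ab_group_add" where
  "braceD m T x y z = T z y x - T z x y + assoc3 m y x z - assoc3 m x y z"

definition pre_LY :: "('k::field_char_0 \<Rightarrow> 'a::ab_group_add \<Rightarrow> 'a) \<Rightarrow> ('a \<Rightarrow> 'a \<Rightarrow> 'a) \<Rightarrow> ('a \<Rightarrow> 'a \<Rightarrow> 'a \<Rightarrow> 'a) \<Rightarrow> bool" where
  "pre_LY scale m T \<longleftrightarrow>
     vector_space scale \<and> bilinear_op scale m \<and> trilinear_op scale T \<and>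
     (\<forall>x y z w. T z (commC m x y) w - T (m y z) x w + T (m x z) y w = 0) \<and>
     (\<forall>x y z w. T x y (commC m z w) = m z (T x y w) - m w (T x y z)) \<and>
     (\<forall>x y z w t. T (T x y z) w t - T (T x y w) z t - T x y (braceD m T z w t) - T x y (T z w t)
                   + T x y (T w z t) + braceD m T z w (T x y t) = 0) \<and>
     (\<forall>x y z w t. T z (braceD m T x y w) t + T z (T x y w) t - T z (T y x w) t
                   + T z w (braceD m T x y t) + T z w (T x y t) - T z w (T y x t)
                   = braceD m T x y (T z w t) - T (braceD m T x y z) w t) \<and>
     (\<forall>x y z w. m (braceD m T x y z) w + m (T x y z) w - m (T y x z) w
                 = braceD m T x y (m z w) - m z (braceD m T x y w))"

end

theory Submission
  imports Defs
begin

text \<open>Both identities hold for purely formal reasons: expanding all brackets by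
multilinearity, each left-hand side is a signed sum of instances of the axioms,
namely of (P1), (P2), (P5) for the first identity and of (P2), (P4), (P5) for the
second.\<close>

lemma lin_in_add: "lin_in scale f \<Longrightarrow> f (u + v) = f u + f v"
  by (simp add: lin_in_def)

lemma lin_in_diff: "lin_in scale f \<Longrightarrow> f (u - v) = f u - f v"
  by (metis add_diff_cancel diff_add_cancel lin_in_add)

lemma lin_in_zero: "lin_in scale f \<Longrightarrow> f 0 = 0"
  using lin_in_diff[of scale f 0 0] by simp

lemma lin_in_minus: "lin_in scale f \<Longrightarrow> f (- u) = - f u"
  using lin_in_diff[of scale f 0 u] lin_in_zero[of scale f] by simp

lemmas lin_in_simps = lin_in_add lin_in_diff lin_in_zero lin_in_minus

lemma bilinear_op_lin_in:
  assumes "bilinear_op scale m"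
  shows "lin_in scale (\<lambda>x. m x y)" "lin_in scale (\<lambda>y. m x y)"
  using assms unfolding bilinear_op_def by blast+

lemma trilinear_op_lin_in:
  assumes "trilinear_op scale T"
  shows "lin_in scale (\<lambda>x. T x y z)" "lin_in scale (\<lambda>y. T x y z)" "lin_in scale (\<lambda>z. T x y z)"
  using assms unfolding trilinear_op_def by blast+

lemmas bilinear_op_simps =
  lin_in_simps[OF bilinear_op_lin_in(1)] lin_in_simps[OF bilinear_op_lin_in(2)]

lemmas trilinear_op_simps =
  lin_in_simps[OF trilinear_op_lin_in(1)] lin_in_simps[OF trilinear_op_lin_in(2)]
  lin_in_simps[OF trilinear_op_lin_in(3)]

definition P1_defect :: "('a \<Rightarrow> 'a \<Rightarrow> 'a) \<Rightarrow> ('a \<Rightarrow> 'a \<Rightarrow> 'a \<Rightarrow> 'a) \<Rightarrow> 'a \<Rightarrow> 'a \<Rightarrow> 'a \<Rightarrow> 'a \<Rightarrow> 'a::ab_group_add"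
  where "P1_defect m T x y z w = T z (commC m x y) w - T (m y z) x w + T (m x z) y w"

definition P2_defect :: "('a \<Rightarrow> 'a \<Rightarrow> 'a) \<Rightarrow> ('a \<Rightarrow> 'a \<Rightarrow> 'a \<Rightarrow> 'a) \<Rightarrow> 'a \<Rightarrow> 'a \<Rightarrow> 'a \<Rightarrow> 'a \<Rightarrow> 'a::ab_group_add"
  where "P2_defect m T x y z w = T x y (commC m z w) - (m z (T x y w) - m w (T x y z))"

definition P4_defect :: "('a \<Rightarrow> 'a \<Rightarrow> 'a) \<Rightarrow> ('a \<Rightarrow> 'a \<Rightarrow> 'a \<Rightarrow> 'a) \<Rightarrow> 'a \<Rightarrow> 'a \<Rightarrow> 'a \<Rightarrow> 'a \<Rightarrow> 'a \<Rightarrow> 'a::ab_group_add"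
  where "P4_defect m T x y z w t =
    T z (braceD m T x y w) t + T z (T x y w) t - T z (T y x w) t
    + T z w (braceD m T x y t) + T z w (T x y t) - T z w (T y x t)
    - (braceD m T x y (T z w t) - T (braceD m T x y z) w t)"

definition P5_defect :: "('a \<Rightarrow> 'a \<Rightarrow> 'a) \<Rightarrow> ('a \<Rightarrow> 'a \<Rightarrow> 'a \<Rightarrow> 'a) \<Rightarrow> 'a \<Rightarrow> 'a \<Rightarrow> 'a \<Rightarrow> 'a \<Rightarrow> 'a::ab_group_add"
  where "P5_defect m T x y z w =
    m (braceD m T x y z) w + m (T x y z) w - m (T y x z) w
    - (braceD m T x y (m z w) - m z (braceD m T x y w))"

lemma pre_LY_defects_vanish:
  assumes "pre_LY scale m T"
  shows "P1_defect m T x y z w = 0" "P2_defect m T x y z w = 0"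
    "P4_defect m T x y z w t = 0" "P5_defect m T x y z w = 0"
  using assms unfolding pre_LY_def P1_defect_def P2_defect_def P4_defect_def P5_defect_def
  by simp_all

lemma cyclic_braceD_commC_eq_defects:
  assumes m: "bilinear_op scale m" and T: "trilinear_op scale T"
  shows "braceD m T (commC m x y) z w + braceD m T (commC m y z) x w + braceD m T (commC m z x) y w
    = (P2_defect m T w z x y - P1_defect m T x y w z + P5_defect m T x y z w)
    + (P2_defect m T w x y z - P1_defect m T y z w x + P5_defect m T y z x w)
    + (P2_defect m T w y z x - P1_defect m T z x w y + P5_defect m T z x y w)"
  unfolding P1_defect_def P2_defect_def P5_defect_def braceD_def commC_def assoc3_def
  by (simp add: bilinear_op_simps[OF m] trilinear_op_simps[OF T] algebra_simps)

lemma braceD_derivation_eq_defects: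
  assumes m: "bilinear_op scale m" and T: "trilinear_op scale T"
  shows "braceD m T x y (braceD m T z w t) - braceD m T (braceD m T x y z) w t
      - braceD m T (T x y z) w t + braceD m T (T y x z) w t
      - braceD m T z (braceD m T x y w) t - braceD m T z (T x y w) t
      + braceD m T z (T y x w) t - braceD m T z w (braceD m T x y t)
    = P4_defect m T x y t z w - P4_defect m T x y t w z
      + m (P5_defect m T x y z w) t - m (P5_defect m T x y w z) t
      + m w (P5_defect m T x y z t) - m z (P5_defect m T x y w t)
      - P5_defect m T x y z (m w t) + P5_defect m T x y w (m z t)
      + P5_defect m T x y (commC m z w) t
      - m (P2_defect m T x y z w - P2_defect m T y x z w) t"
  unfolding P2_defect_def P4_defect_def P5_defect_def braceD_def commC_def assoc3_def
  by (simp add: bilinear_op_simps[OF m] trilinear_op_simps[OF T] algebra_simps)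

theorem lemma3p8:
  fixes scale :: "'k::field_char_0 \<Rightarrow> 'a::ab_group_add \<Rightarrow> 'a"
    and m :: "'a \<Rightarrow> 'a \<Rightarrow> 'a" and T :: "'a \<Rightarrow> 'a \<Rightarrow> 'a \<Rightarrow> 'a"
  assumes "pre_LY scale m T"
  shows "(\<forall>x y z w. braceD m T (commC m x y) z w + braceD m T (commC m y z) x w
                      + braceD m T (commC m z x) y w = 0) \<and>
         (\<forall>x y z w t. braceD m T x y (braceD m T z w t) - braceD m T (braceD m T x y z) w t
                      - braceD m T (T x y z) w t + braceD m T (T y x z) w t
                      - braceD m T z (braceD m T x y w) t - braceD m T z (T x y w) t
                      + braceD m T z (T y x w) t - braceD m T z w (braceD m T x y t) = 0)"
proof -
  have m: "bilinear_op scale m" and T: "trilinear_op scale T"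
    using assms unfolding pre_LY_def by simp_all
  show ?thesis
    by (simp add: cyclic_braceD_commC_eq_defects[OF m T] braceD_derivation_eq_defects[OF m T]
        pre_LY_defects_vanish[OF assms] bilinear_op_simps[OF m])
qed

end
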